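(* Let $m\ge1$ and let $Z_l=\{z_{j,l}\}_{j=1}^m$, $l=1,2$, be two $m$-point subsets of the unit circle with no common points, labeled as $z_{j,l}=e^{ix_{j,l}}$ with $0\le x_{1,l}<x_{2,l}<\dots<x_{m,l}<2\pi$. For $k=1,\dots,m$ put $$\omega_k=\frac{\prod_{j=1}^m\sin\frac{x_{k,1}-x_{j,2}}{2}}{\prod_{j=1,\,j\ne k}^{m}\sin\frac{x_{k,1}-x_{j,1}}{2}}\quad(\ne 0).$$ Then $Z_1$ and $Z_2$ interlace if and only if all the numbers $\omega_1,\dots,\omega_m$ have the same sign.
   Context: Two disjoint $m$-point sets $Z_1,Z_2$ on the unit circle interlace if, with the labeling above and (after possibly swapping the roles of the sets) $x_{1,1}<x_{1,2}$, one has $x_{1,1}<x_{1,2}<x_{2,1}<x_{2,2}<\dots<x_{m,1}<x_{m,2}$; equivalently, each open arc between cyclically consecutive points of $Z_1$ contains exactly one point of $Z_2$. *)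

theory Defs
  imports Complex_Main
begin

definition admissible_labeling :: "nat \<Rightarrow> (nat \<Rightarrow> real) \<Rightarrow> bool" where
  "admissible_labeling m x \<longleftrightarrow>
     (\<forall>j\<in>{1..m}. 0 \<le> x j \<and> x j < 2 * pi) \<and>
     (\<forall>j\<in>{1..m}. \<forall>k\<in>{1..m}. j < k \<longrightarrow> x j < x k)"

definition interlace_ord :: "nat \<Rightarrow> (nat \<Rightarrow> real) \<Rightarrow> (nat \<Rightarrow> real) \<Rightarrow> bool" where
  "interlace_ord m a b \<longleftrightarrow>
     (\<forall>j\<in>{1..m}. a j < b j) \<and> (\<forall>j\<in>{1..<m}. b j < a (Suc j))"

definition interlace :: "nat \<Rightarrow> (nat \<Rightarrow> real) \<Rightarrow> (nat \<Rightarrow> real) \<Rightarrow> bool" where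
  "interlace m x1 x2 \<longleftrightarrow> interlace_ord m x1 x2 \<or> interlace_ord m x2 x1"

definition omega :: "nat \<Rightarrow> (nat \<Rightarrow> real) \<Rightarrow> (nat \<Rightarrow> real) \<Rightarrow> nat \<Rightarrow> real" where
  "omega m x1 x2 k =
     (\<Prod>j=1..m. sin ((x1 k - x2 j) / 2)) / (\<Prod>j\<in>{1..m} - {k}. sin ((x1 k - x1 j) / 2))"

end

theory Submission
  imports Defs
begin

text \<open>For angles in \<open>[0, 2\<pi>)\<close> the number \<open>sin ((a - b) / 2)\<close> has the sign of \<open>a - b\<close>.
  Hence the numerator of \<open>\<omega>\<^sub>k\<close> has sign \<open>(-1)^N\<^sub>k\<close>, where \<open>N\<^sub>k\<close> counts the points of
  \<open>Z\<^sub>2\<close> above \<open>x\<^sub>k\<^sub>,\<^sub>1\<close>, and its denominator has sign \<open>(-1)^(m-k)\<close>. So the \<open>\<omega>\<^sub>k\<close> share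
  a sign iff \<open>N\<^sub>k + m - k\<close> has constant parity, i.e. iff every gap between consecutive
  points of \<open>Z\<^sub>1\<close> contains an odd number of points of \<open>Z\<^sub>2\<close>. As there are only \<open>m\<close>
  such points for the \<open>m - 1\<close> gaps, every gap then contains exactly one of them,
  which is interlacing.\<close>

lemma sin_half_diff_neg_iff:
  fixes a b :: real
  assumes "0 \<le> a" "a < 2 * pi" "0 \<le> b" "b < 2 * pi"
  shows "sin ((a - b) / 2) < 0 \<longleftrightarrow> a < b"
proof (cases a b rule: linorder_cases)
  case less
  then have "0 < sin ((b - a) / 2)" using assms by (intro sin_gt_zero) auto
  moreover have "sin ((a - b) / 2) = - sin ((b - a) / 2)"
    by (metis minus_diff_eq minus_divide_left sin_minus)
  ultimately show ?thesis using less by simp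
next
  case greater
  then have "0 < sin ((a - b) / 2)" using assms by (intro sin_gt_zero) auto
  then show ?thesis using greater by simp
qed simp

lemma sin_half_diff_eq_0_iff:
  fixes a b :: real
  assumes "0 \<le> a" "a < 2 * pi" "0 \<le> b" "b < 2 * pi"
  shows "sin ((a - b) / 2) = 0 \<longleftrightarrow> a = b"
proof -
  have "sin ((a - b) / 2) = - sin ((b - a) / 2)"
    by (metis minus_diff_eq minus_divide_left sin_minus)
  then show ?thesis
    using sin_half_diff_neg_iff[OF assms] sin_half_diff_neg_iff[OF assms(3,4,1,2)]
    by (cases a b rule: linorder_cases) auto
qed

lemma sgn_prod_eq_power_card_neg:
  fixes f :: "'a \<Rightarrow> real"
  assumes "finite A" "\<And>j. j \<in> A \<Longrightarrow> f j \<noteq> 0"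
  shows "sgn (\<Prod>j\<in>A. f j) = (-1) ^ card {j\<in>A. f j < 0}"
  using assms
proof (induction A rule: finite_induct)
  case (insert x F)
  have "{j\<in>insert x F. f j < 0} = (if f x < 0 then insert x {j\<in>F. f j < 0} else {j\<in>F. f j < 0})"
    by auto
  moreover have "x \<notin> {j\<in>F. f j < 0}" "finite {j\<in>F. f j < 0}" using insert.hyps by auto
  moreover have "sgn (f x) = (if f x < 0 then -1 else 1)" using insert.prems by (simp add: sgn_real_def)
  ultimately show ?case using insert by (simp add: sgn_mult)
qed simp

lemma sgn_eq_minus_one_power_iff:
  fixes r :: real
  assumes "sgn r = (-1) ^ n"
  shows "0 < r \<longleftrightarrow> even n" and "r < 0 \<longleftrightarrow> odd n"
  using assms by (cases "even n"; auto simp: sgn_real_def split: if_splits)+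

lemma admissible_labeling_strict_mono_on:
  "admissible_labeling m x \<Longrightarrow> strict_mono_on {1..m} x"
  unfolding admissible_labeling_def by (intro strict_mono_onI) blast

definition points_above :: "nat \<Rightarrow> (nat \<Rightarrow> real) \<Rightarrow> real \<Rightarrow> nat" where
  "points_above m x t = card {j\<in>{1..m}. t < x j}"

lemma points_above_le: "points_above m x t \<le> m"
proof -
  have "card {j\<in>{1..m}. t < x j} \<le> card {1..m}" by (rule card_mono) auto
  then show ?thesis unfolding points_above_def by simp
qed

lemma points_above_antimono: "s \<le> t \<Longrightarrow> points_above m x t \<le> points_above m x s"
  unfolding points_above_def by (intro card_mono) auto

lemma points_above_eq_iff:
  assumes x: "strict_mono_on {1..m} x" and s: "1 \<le> s" "s \<le> m + 1"
  shows "points_above m x t = m + 1 - s \<longleftrightarrow> (s \<le> m \<longrightarrow> t < x s) \<and> (1 < s \<longrightarrow> x (s - 1) \<le> t)"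
proof
  assume count: "points_above m x t = m + 1 - s"
  have "t < x s" if "s \<le> m"
  proof (rule ccontr)
    assume "\<not> t < x s"
    then have "x j \<le> t" if "j \<in> {1..s}" for j
      using strict_mono_on_leD[OF x, of j s] that \<open>s \<le> m\<close> by auto
    then have "{j\<in>{1..m}. t < x j} \<subseteq> {Suc s..m}" by fastforce
    then have "points_above m x t \<le> card {Suc s..m}"
      unfolding points_above_def by (intro card_mono) auto
    then show False using count that by simp
  qed
  moreover have "x (s - 1) \<le> t" if "1 < s"
  proof (rule ccontr)
    assume "\<not> x (s - 1) \<le> t"
    moreover have "x (s - 1) \<le> x j" if "j \<in> {s - 1..m}" for j
      using that \<open>1 < s\<close> s by (intro strict_mono_on_leD[OF x]) auto
    ultimately have "t < x j" if "j \<in> {s - 1..m}" for j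
      using that by force
    then have "{s - 1..m} \<subseteq> {j\<in>{1..m}. t < x j}" using \<open>1 < s\<close> by auto
    then have "card {s - 1..m} \<le> points_above m x t"
      unfolding points_above_def by (intro card_mono) auto
    then show False using count s that by simp
  qed
  ultimately show "(s \<le> m \<longrightarrow> t < x s) \<and> (1 < s \<longrightarrow> x (s - 1) \<le> t)" by blast
next
  assume bounds: "(s \<le> m \<longrightarrow> t < x s) \<and> (1 < s \<longrightarrow> x (s - 1) \<le> t)"
  have "{j\<in>{1..m}. t < x j} = {s..m}"
  proof (intro set_eqI iffI)
    fix j assume j: "j \<in> {j\<in>{1..m}. t < x j}"
    show "j \<in> {s..m}"
    proof (rule ccontr)
      assume "j \<notin> {s..m}"
      then have "x j \<le> x (s - 1)" using j s by (intro strict_mono_on_leD[OF x]) auto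
      then show False using j bounds \<open>j \<notin> {s..m}\<close> by auto
    qed
  next
    fix j assume "j \<in> {s..m}"
    then show "j \<in> {j\<in>{1..m}. t < x j}"
      using bounds s strict_mono_on_leD[OF x, of s j] by auto
  qed
  then show "points_above m x t = m + 1 - s" unfolding points_above_def by simp
qed

lemma decreasing_nat_gap:
  fixes N :: "nat \<Rightarrow> nat"
  assumes "i \<le> j" and decreasing: "\<And>k. i \<le> k \<Longrightarrow> k < j \<Longrightarrow> N (Suc k) < N k"
  shows "N j + (j - i) \<le> N i"
  using assms(1)
proof (induction j rule: dec_induct)
  case (step k)
  have "N (Suc k) < N k" using step.hyps by (rule decreasing)
  then show ?case using step by linarith
qed simp

text \<open>Constant parity of \<open>N k + (m - k)\<close> forces \<open>N\<close> to drop at every step; starting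
  from at most \<open>m\<close> it then leaves room for only two shapes.\<close>

lemma antitone_constant_parity_cases:
  fixes N :: "nat \<Rightarrow> nat"
  assumes "1 \<le> m"
    and antitone: "\<And>k. 1 \<le> k \<Longrightarrow> k < m \<Longrightarrow> N (Suc k) \<le> N k"
    and bounded: "N 1 \<le> m"
    and parity: "(\<forall>k\<in>{1..m}. even (N k + (m - k))) \<or> (\<forall>k\<in>{1..m}. odd (N k + (m - k)))"
  shows "(\<forall>k\<in>{1..m}. N k = m + 1 - k) \<or> (\<forall>k\<in>{1..m}. N k = m - k)"
proof -
  have parity_step: "even (N (Suc k) + (m - Suc k)) \<longleftrightarrow> even (N k + (m - k))"
    if "1 \<le> k" "k < m" for k
  proof -
    have "k \<in> {1..m}" "Suc k \<in> {1..m}" using that by auto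
    then show ?thesis using parity by blast
  qed
  have decreasing: "N (Suc k) < N k" if "1 \<le> k" "k < m" for k
  proof -
    have "m - k = Suc (m - Suc k)" using that by simp
    then have "N (Suc k) \<noteq> N k" using parity_step[OF that] by (auto simp del: even_add)
    then show ?thesis using antitone[OF that] by simp
  qed
  have bounds: "N m + (m - k) \<le> N k \<and> N k \<le> m + 1 - k" if k: "k \<in> {1..m}" for k
  proof -
    have "N m + (m - k) \<le> N k" using k by (intro decreasing_nat_gap decreasing) auto
    moreover have "N k + (k - 1) \<le> N 1" using k by (intro decreasing_nat_gap decreasing) auto
    ultimately show ?thesis using bounded k by auto
  qed
  show ?thesis
  proof (cases "N m = 0")
    case True
    from parity have even: "\<forall>k\<in>{1..m}. even (N k + (m - k))"
    proof
      assume odd: "\<forall>k\<in>{1..m}. odd (N k + (m - k))"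
      have "odd (N m + (m - m))" using \<open>1 \<le> m\<close> by (intro bspec[OF odd]) simp
      then show ?thesis using True by simp
    qed
    have "N k = m - k" if k: "k \<in> {1..m}" for k
    proof -
      have "N k = m - k \<or> N k = Suc (m - k)" using bounds[OF k] True k by auto
      moreover have "even (N k + (m - k))" using even k by blast
      ultimately show ?thesis by auto
    qed
    then show ?thesis by blast
  next
    case False
    have "N k = m + 1 - k" if k: "k \<in> {1..m}" for k
      using bounds[OF k] False k by linarith
    then show ?thesis by blast
  qed
qed

lemma interlace_ord_iff_points_above:
  assumes x2: "strict_mono_on {1..m} x2"
    and disjoint: "\<And>j k. j \<in> {1..m} \<Longrightarrow> k \<in> {1..m} \<Longrightarrow> x1 j \<noteq> x2 k"
  shows "interlace_ord m x1 x2 \<longleftrightarrow> (\<forall>k\<in>{1..m}. points_above m x2 (x1 k) = m + 1 - k)"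
proof -
  have count: "points_above m x2 (x1 k) = m + 1 - k \<longleftrightarrow>
      x1 k < x2 k \<and> (1 < k \<longrightarrow> x2 (k - 1) < x1 k)" if k: "k \<in> {1..m}" for k
  proof -
    have s: "1 \<le> k" "k \<le> m + 1" using k by auto
    have "x2 (k - 1) \<le> x1 k \<longleftrightarrow> x2 (k - 1) < x1 k" if "1 < k"
    proof -
      have "k - 1 \<in> {1..m}" using k that by auto
      then show ?thesis using disjoint[OF k] by fastforce
    qed
    then show ?thesis unfolding points_above_eq_iff[OF x2 s] using k by auto
  qed
  show ?thesis
  proof
    assume "interlace_ord m x1 x2"
    then have below: "\<forall>j\<in>{1..m}. x1 j < x2 j" and above: "\<forall>j\<in>{1..<m}. x2 j < x1 (Suc j)"
      unfolding interlace_ord_def by auto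
    have "x2 (k - 1) < x1 k" if "k \<in> {1..m}" "1 < k" for k
    proof -
      have "k - 1 \<in> {1..<m}" "Suc (k - 1) = k" using that by auto
      then show ?thesis using above by metis
    qed
    then show "\<forall>k\<in>{1..m}. points_above m x2 (x1 k) = m + 1 - k"
      using below count by simp
  next
    assume "\<forall>k\<in>{1..m}. points_above m x2 (x1 k) = m + 1 - k"
    then have "x1 k < x2 k \<and> (1 < k \<longrightarrow> x2 (k - 1) < x1 k)" if "k \<in> {1..m}" for k
      using count that by blast
    from this[of "Suc _"] this show "interlace_ord m x1 x2"
      unfolding interlace_ord_def by auto
  qed
qed

lemma interlace_ord_swap_iff_points_above:
  assumes x2: "strict_mono_on {1..m} x2"
    and disjoint: "\<And>j k. j \<in> {1..m} \<Longrightarrow> k \<in> {1..m} \<Longrightarrow> x1 j \<noteq> x2 k"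
  shows "interlace_ord m x2 x1 \<longleftrightarrow> (\<forall>k\<in>{1..m}. points_above m x2 (x1 k) = m - k)"
proof -
  have count: "points_above m x2 (x1 k) = m - k \<longleftrightarrow>
      x2 k < x1 k \<and> (k < m \<longrightarrow> x1 k < x2 (Suc k))" if k: "k \<in> {1..m}" for k
  proof -
    have s: "1 \<le> Suc k" "Suc k \<le> m + 1" using k by auto
    have "x2 k \<le> x1 k \<longleftrightarrow> x2 k < x1 k" using disjoint[OF k k] by fastforce
    then show ?thesis using points_above_eq_iff[OF x2 s, of "x1 k"] k by auto
  qed
  show ?thesis
  proof
    assume "interlace_ord m x2 x1"
    then have "\<forall>j\<in>{1..m}. x2 j < x1 j" and "\<forall>j\<in>{1..<m}. x1 j < x2 (Suc j)"
      unfolding interlace_ord_def by auto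
    then show "\<forall>k\<in>{1..m}. points_above m x2 (x1 k) = m - k"
      using count by simp
  next
    assume "\<forall>k\<in>{1..m}. points_above m x2 (x1 k) = m - k"
    then have "x2 k < x1 k \<and> (k < m \<longrightarrow> x1 k < x2 (Suc k))" if "k \<in> {1..m}" for k
      using count that by blast
    then show "interlace_ord m x2 x1"
      unfolding interlace_ord_def by simp
  qed
qed

lemma interlace_iff_constant_parity:
  assumes "1 \<le> m" and x1: "strict_mono_on {1..m} x1" and x2: "strict_mono_on {1..m} x2"
    and disjoint: "\<And>j k. j \<in> {1..m} \<Longrightarrow> k \<in> {1..m} \<Longrightarrow> x1 j \<noteq> x2 k"
  shows "interlace m x1 x2 \<longleftrightarrow>
    (\<forall>k\<in>{1..m}. even (points_above m x2 (x1 k) + (m - k))) \<or>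
    (\<forall>k\<in>{1..m}. odd (points_above m x2 (x1 k) + (m - k)))"
  (is "_ \<longleftrightarrow> ?parity")
proof -
  let ?N = "\<lambda>k. points_above m x2 (x1 k)"
  have "?parity \<Longrightarrow> (\<forall>k\<in>{1..m}. ?N k = m + 1 - k) \<or> (\<forall>k\<in>{1..m}. ?N k = m - k)"
  proof (rule antitone_constant_parity_cases[OF \<open>1 \<le> m\<close>])
    show "?N (Suc k) \<le> ?N k" if "1 \<le> k" "k < m" for k
      using that by (intro points_above_antimono strict_mono_on_leD[OF x1]) auto
  qed (rule points_above_le)
  moreover have "(\<forall>k\<in>{1..m}. ?N k = m + 1 - k) \<or> (\<forall>k\<in>{1..m}. ?N k = m - k) \<Longrightarrow> ?parity"
    by auto
  moreover have "interlace_ord m x1 x2 \<longleftrightarrow> (\<forall>k\<in>{1..m}. ?N k = m + 1 - k)"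
    using x2 disjoint by (rule interlace_ord_iff_points_above)
  moreover have "interlace_ord m x2 x1 \<longleftrightarrow> (\<forall>k\<in>{1..m}. ?N k = m - k)"
    using x2 disjoint by (rule interlace_ord_swap_iff_points_above)
  ultimately show ?thesis unfolding interlace_def by argo
qed

lemma sgn_omega:
  assumes x1: "admissible_labeling m x1" and x2: "admissible_labeling m x2"
    and disjoint: "\<And>j k. j \<in> {1..m} \<Longrightarrow> k \<in> {1..m} \<Longrightarrow> x1 j \<noteq> x2 k"
    and k: "k \<in> {1..m}"
  shows "sgn (omega m x1 x2 k) = (-1) ^ (points_above m x2 (x1 k) + (m - k))"
proof -
  have range1: "0 \<le> x1 j" "x1 j < 2 * pi" if "j \<in> {1..m}" for j
    using x1 that unfolding admissible_labeling_def by auto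
  have range2: "0 \<le> x2 j" "x2 j < 2 * pi" if "j \<in> {1..m}" for j
    using x2 that unfolding admissible_labeling_def by auto
  have mono1: "strict_mono_on {1..m} x1" using x1 by (rule admissible_labeling_strict_mono_on)
  have sin_neg_iff: "sin ((x1 k - y) / 2) < 0 \<longleftrightarrow> x1 k < y" if "0 \<le> y" "y < 2 * pi" for y
    using sin_half_diff_neg_iff range1[OF k] that by blast
  have sin_eq_0_iff: "sin ((x1 k - y) / 2) = 0 \<longleftrightarrow> x1 k = y" if "0 \<le> y" "y < 2 * pi" for y
    using sin_half_diff_eq_0_iff range1[OF k] that by blast
  have "sgn (\<Prod>j=1..m. sin ((x1 k - x2 j) / 2)) = (-1) ^ card {j\<in>{1..m}. sin ((x1 k - x2 j) / 2) < 0}"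
    using sin_eq_0_iff range2 disjoint[OF k] by (intro sgn_prod_eq_power_card_neg) auto
  also have "{j\<in>{1..m}. sin ((x1 k - x2 j) / 2) < 0} = {j\<in>{1..m}. x1 k < x2 j}"
    using sin_neg_iff range2 by auto
  finally have numerator: "sgn (\<Prod>j=1..m. sin ((x1 k - x2 j) / 2)) = (-1) ^ points_above m x2 (x1 k)"
    unfolding points_above_def .
  have "sgn (\<Prod>j\<in>{1..m} - {k}. sin ((x1 k - x1 j) / 2)) =
      (-1) ^ card {j\<in>{1..m} - {k}. sin ((x1 k - x1 j) / 2) < 0}"
    using sin_eq_0_iff range1 strict_mono_on_eqD[OF mono1] k
    by (intro sgn_prod_eq_power_card_neg) auto
  also have "{j\<in>{1..m} - {k}. sin ((x1 k - x1 j) / 2) < 0} = {Suc k..m}"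
    using sin_neg_iff range1 strict_mono_on_less[OF mono1] k by auto
  finally have denominator: "sgn (\<Prod>j\<in>{1..m} - {k}. sin ((x1 k - x1 j) / 2)) = (-1) ^ (m - k)"
    by simp
  show ?thesis
    unfolding omega_def sgn_divide numerator denominator by (simp add: power_add divide_inverse flip: power_inverse)
qed

theorem proposition3:
  fixes m :: nat and x1 x2 :: "nat \<Rightarrow> real"
  assumes "m \<ge> 1"
    and "admissible_labeling m x1" and "admissible_labeling m x2"
    and "\<forall>j\<in>{1..m}. \<forall>k\<in>{1..m}. exp (\<i> * complex_of_real (x1 j)) \<noteq> exp (\<i> * complex_of_real (x2 k))"
  shows "interlace m x1 x2 \<longleftrightarrow>
           ((\<forall>k\<in>{1..m}. omega m x1 x2 k > 0) \<or> (\<forall>k\<in>{1..m}. omega m x1 x2 k < 0))"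
proof -
  have disjoint: "\<And>j k. j \<in> {1..m} \<Longrightarrow> k \<in> {1..m} \<Longrightarrow> x1 j \<noteq> x2 k"
    using assms(4) by metis
  have "omega m x1 x2 k > 0 \<longleftrightarrow> even (points_above m x2 (x1 k) + (m - k))"
    and "omega m x1 x2 k < 0 \<longleftrightarrow> odd (points_above m x2 (x1 k) + (m - k))"
    if "k \<in> {1..m}" for k
    using sgn_eq_minus_one_power_iff sgn_omega[OF assms(2,3) disjoint that] by blast+
  moreover have "interlace m x1 x2 \<longleftrightarrow>
      (\<forall>k\<in>{1..m}. even (points_above m x2 (x1 k) + (m - k))) \<or>
      (\<forall>k\<in>{1..m}. odd (points_above m x2 (x1 k) + (m - k)))"
    using assms(1) admissible_labeling_strict_mono_on[OF assms(2)]
      admissible_labeling_strict_mono_on[OF assms(3)] disjoint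
    by (rule interlace_iff_constant_parity)
  ultimately show ?thesis by simp
qed

end
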